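(* Under the standing assumptions, $G$ does not contain a vertex $v$ of degree $8$ together with pairwise distinct neighbours $x,t,w,y,z,u$ of $v$ and a vertex $p\notin\{v,x,t,w,y,z,u\}$ such that $xt,tw,wy,zu\in E(G)$, $p$ is adjacent to both $y$ and $z$, and $d(t)=d(y)=d(z)=3$.
   Context: Standing assumptions: A total $9$-coloring of a graph is an assignment of colors from $\{1,\dots,9\}$ to the vertices and edges such that adjacent vertices, edges sharing an endpoint, and a vertex and an incident edge receive different colors. A $4$-fan is the graph on six vertices $c,u_1,\dots,u_5$ with edges $cu_j$ ($1\le j\le5$) and $u_ju_{j+1}$ ($1\le j\le4$). $G$ is a minimal counterexample: $G$ is a simple planar graph with maximum degree $8$, containing no subgraph isomorphic to a $4$-fan, that has no total $9$-coloring, and such that every simple planar graph $H$ with maximum degree at most $8$, no subgraph isomorphic to a $4$-fan, and $|V(H)|+|E(H)|<|V(G)|+|E(G)|$ has a total $9$-coloring. $d(\cdot)$ denotes degree in $G$. *)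

theory Defs
  imports "HOL-Analysis.Analysis"
begin

definition simple_graph :: "'a set \<Rightarrow> 'a set set \<Rightarrow> bool" where
  "simple_graph V E \<longleftrightarrow> finite V \<and> (\<forall>e\<in>E. e \<subseteq> V \<and> card e = 2)"

definition degree :: "'a set \<Rightarrow> 'a set set \<Rightarrow> 'a \<Rightarrow> nat" where
  "degree V E v = card {u\<in>V. {u, v} \<in> E}"

definition max_degree_le :: "nat \<Rightarrow> 'a set \<Rightarrow> 'a set set \<Rightarrow> bool" where
  "max_degree_le k V E \<longleftrightarrow> (\<forall>v\<in>V. degree V E v \<le> k)"

definition max_degree_eq :: "nat \<Rightarrow> 'a set \<Rightarrow> 'a set set \<Rightarrow> bool" where
  "max_degree_eq k V E \<longleftrightarrow> max_degree_le k V E \<and> (\<exists>v\<in>V. degree V E v = k)"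

definition planar :: "'a set \<Rightarrow> 'a set set \<Rightarrow> bool" where
  "planar V E \<longleftrightarrow>
     (\<exists>(pos :: 'a \<Rightarrow> real^2) (g :: 'a set \<Rightarrow> real \<Rightarrow> real^2).
        inj_on pos V \<and>
        (\<forall>e\<in>E. arc (g e) \<and> {pathstart (g e), pathfinish (g e)} = pos ` e \<and>
                 path_image (g e) \<inter> pos ` V = pos ` e) \<and>
        (\<forall>e\<in>E. \<forall>e'\<in>E. e \<noteq> e' \<longrightarrow> path_image (g e) \<inter> path_image (g e') \<subseteq> pos ` (e \<inter> e')))"

text \<open>Contains a (not necessarily induced) subgraph isomorphic to the 4-fan.\<close>

definition has_4fan :: "'a set \<Rightarrow> 'a set set \<Rightarrow> bool" where
  "has_4fan V E \<longleftrightarrow>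
     (\<exists>c u1 u2 u3 u4 u5. distinct [c, u1, u2, u3, u4, u5] \<and>
        {c, u1, u2, u3, u4, u5} \<subseteq> V \<and>
        {c, u1} \<in> E \<and> {c, u2} \<in> E \<and> {c, u3} \<in> E \<and> {c, u4} \<in> E \<and> {c, u5} \<in> E \<and>
        {u1, u2} \<in> E \<and> {u2, u3} \<in> E \<and> {u3, u4} \<in> E \<and> {u4, u5} \<in> E)"

definition total_coloring :: "nat \<Rightarrow> 'a set \<Rightarrow> 'a set set \<Rightarrow> ('a \<Rightarrow> nat) \<Rightarrow> ('a set \<Rightarrow> nat) \<Rightarrow> bool" where
  "total_coloring k V E cv ce \<longleftrightarrow>
     (\<forall>v\<in>V. cv v \<in> {1..k}) \<and> (\<forall>e\<in>E. ce e \<in> {1..k}) \<and>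
     (\<forall>u v. {u, v} \<in> E \<longrightarrow> cv u \<noteq> cv v) \<and>
     (\<forall>e\<in>E. \<forall>e'\<in>E. e \<noteq> e' \<and> e \<inter> e' \<noteq> {} \<longrightarrow> ce e \<noteq> ce e') \<and>
     (\<forall>e\<in>E. \<forall>v\<in>e. cv v \<noteq> ce e)"

definition total_colorable :: "nat \<Rightarrow> 'a set \<Rightarrow> 'a set set \<Rightarrow> bool" where
  "total_colorable k V E \<longleftrightarrow> (\<exists>cv ce. total_coloring k V E cv ce)"

text \<open>Minimal counterexample. Competitor graphs H are taken on vertex type nat,
  which represents every finite graph up to isomorphism.\<close>

definition minimal_counterexample :: "'a set \<Rightarrow> 'a set set \<Rightarrow> bool" where
  "minimal_counterexample V E \<longleftrightarrow>
     simple_graph V E \<and> planar V E \<and> max_degree_eq 8 V E \<and> \<not> has_4fan V E \<and>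
     \<not> total_colorable 9 V E \<and>
     (\<forall>(VH :: nat set) EH. simple_graph VH EH \<and> planar VH EH \<and> max_degree_le 8 VH EH \<and>
        \<not> has_4fan VH EH \<and> card VH + card EH < card V + card E \<longrightarrow> total_colorable 9 VH EH)"

end

theory Submission
  imports Defs
begin

(* Delete the edge vy.  By minimality the smaller graph has a total 9-colouring, and since v has
   degree at most 8 some colour a is missing at v.  Only the twelve configuration edges and the
   degree-3 vertices t, y, z get new colours.  At v the new edge colours are drawn from a and the
   old colours of its configuration edges, at x, w, u and p they permute the old colours, so all
   other edges stay compatible; such a choice always exists, by a finite case analysis on the
   coincidences among the old colours.  Finally t, y and z see only six colours each. *)

definition nbrs :: "'a set set \<Rightarrow> 'a \<Rightarrow> 'a set" where
  "nbrs E q = {r. {q, r} \<in> E}"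

lemma simple_graph_edgeD:
  assumes "simple_graph V E" "{a, b} \<in> E"
  shows "a \<noteq> b" "a \<in> V" "b \<in> V"
proof -
  have "card {a, b} = 2" "{a, b} \<subseteq> V"
    using assms unfolding simple_graph_def by auto
  then show "a \<noteq> b" "a \<in> V" "b \<in> V"
    by (auto simp: card_2_iff)
qed

lemma simple_graph_edge_through:
  assumes "simple_graph V E" "e \<in> E" "q \<in> e"
  obtains r where "e = {q, r}"
proof -
  obtain a b where "e = {a, b}"
    using assms(1,2) unfolding simple_graph_def card_2_iff by blast
  with assms(3) that show thesis
    by (metis insert_commute insertE singletonD)
qed

lemma simple_graph_finite_edges: "simple_graph V E \<Longrightarrow> finite E"
  unfolding simple_graph_def by (metis Pow_iff finite_Pow_iff finite_subset subsetI)

lemma nbrs_subset_vertices: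
  assumes "simple_graph V E"
  shows "nbrs E q \<subseteq> V"
  unfolding nbrs_def using simple_graph_edgeD(3)[OF assms] by blast

lemma finite_nbrs:
  assumes "simple_graph V E"
  shows "finite (nbrs E q)"
  using finite_subset[OF nbrs_subset_vertices[OF assms]] assms unfolding simple_graph_def by blast

lemma degree_eq_card_nbrs:
  assumes "simple_graph V E"
  shows "degree V E q = card (nbrs E q)"
proof -
  have "{r \<in> V. {r, q} \<in> E} = nbrs E q"
    using simple_graph_edgeD(2)[OF assms] unfolding nbrs_def by (auto simp: insert_commute)
  then show ?thesis
    unfolding degree_def by simp
qed

lemma nbrs_eq_if_degree_3:
  assumes "simple_graph V E" "degree V E q = 3" "distinct [a, b, c]"
    "{q, a} \<in> E" "{q, b} \<in> E" "{q, c} \<in> E"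
  shows "nbrs E q = {a, b, c}"
proof (rule sym, rule card_subset_eq)
  show "finite (nbrs E q)"
    using finite_nbrs[OF assms(1)] .
  show "{a, b, c} \<subseteq> nbrs E q"
    using assms(4-6) unfolding nbrs_def by simp
  show "card {a, b, c} = card (nbrs E q)"
    using assms(2,3) degree_eq_card_nbrs[OF assms(1)] by simp
qed

section \<open>Minimality under edge deletion\<close>

lemma simple_graph_mono: "simple_graph V E \<Longrightarrow> E' \<subseteq> E \<Longrightarrow> simple_graph V E'"
  unfolding simple_graph_def by blast

lemma planar_mono:
  assumes "planar V E" "E' \<subseteq> E"
  shows "planar V E'"
proof -
  obtain pos :: "'a \<Rightarrow> real^2" and g :: "'a set \<Rightarrow> real \<Rightarrow> real^2" where
    "inj_on pos V"
    "\<forall>e\<in>E. arc (g e) \<and> {pathstart (g e), pathfinish (g e)} = pos ` e \<and>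
       path_image (g e) \<inter> pos ` V = pos ` e"
    "\<forall>e\<in>E. \<forall>e'\<in>E. e \<noteq> e' \<longrightarrow> path_image (g e) \<inter> path_image (g e') \<subseteq> pos ` (e \<inter> e')"
    using assms(1) unfolding planar_def by blast
  with assms(2) show ?thesis
    unfolding planar_def by (intro exI[of _ pos] exI[of _ g]) (simp add: subset_iff)
qed

lemma max_degree_le_mono:
  assumes "simple_graph V E" "max_degree_le k V E" "E' \<subseteq> E"
  shows "max_degree_le k V E'"
  unfolding max_degree_le_def
proof
  fix q assume "q \<in> V"
  have "degree V E' q \<le> degree V E q"
    unfolding degree_def using assms(1,3) unfolding simple_graph_def by (intro card_mono) auto
  then show "degree V E' q \<le> k"
    using assms(2) \<open>q \<in> V\<close> unfolding max_degree_le_def by fastforce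
qed

lemma has_4fan_mono: "has_4fan V E' \<Longrightarrow> E' \<subseteq> E \<Longrightarrow> has_4fan V E"
  unfolding has_4fan_def by blast

locale graph_relabelling =
  fixes V :: "'a set" and E :: "'a set set" and f :: "'a \<Rightarrow> 'b"
  assumes simple: "simple_graph V E" and inj: "inj_on f V"
begin

lemma edges_subset_Pow: "E \<subseteq> Pow V"
  using simple unfolding simple_graph_def by blast

lemma inj_on_image_edges: "inj_on ((`) f) E"
  using inj_on_subset[OF inj_on_image_Pow[OF inj] edges_subset_Pow] .

lemma image_edge_iff: "a \<in> V \<Longrightarrow> b \<in> V \<Longrightarrow> {f a, f b} \<in> (`) f ` E \<longleftrightarrow> {a, b} \<in> E"
  using inj_on_image_mem_iff[OF inj_on_image_Pow[OF inj], of "{a, b}" E] edges_subset_Pow by simp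

lemma simple_graph_image: "simple_graph (f ` V) ((`) f ` E)"
  unfolding simple_graph_def
proof (intro conjI ballI)
  show "finite (f ` V)"
    using simple unfolding simple_graph_def by blast
next
  fix e' assume "e' \<in> (`) f ` E"
  then obtain e where e: "e \<in> E" "e' = f ` e" by blast
  then have "e \<subseteq> V" "card e = 2"
    using simple unfolding simple_graph_def by blast+
  then show "e' \<subseteq> f ` V" "card e' = 2"
    using e(2) card_image[OF inj_on_subset[OF inj]] by auto
qed

lemma degree_image: "q \<in> V \<Longrightarrow> degree (f ` V) ((`) f ` E) (f q) = degree V E q"
proof -
  assume "q \<in> V"
  then have "{r \<in> f ` V. {r, f q} \<in> (`) f ` E} = f ` {r \<in> V. {r, q} \<in> E}"
    using image_edge_iff by auto
  then show ?thesis
    unfolding degree_def by (simp add: card_image inj_on_subset[OF inj])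
qed

lemma max_degree_le_image: "max_degree_le k V E \<Longrightarrow> max_degree_le k (f ` V) ((`) f ` E)"
  unfolding max_degree_le_def using degree_image by auto

lemma has_4fan_image: "has_4fan (f ` V) ((`) f ` E) \<Longrightarrow> has_4fan V E"
proof -
  assume "has_4fan (f ` V) ((`) f ` E)"
  then obtain c u1 u2 u3 u4 u5 where
    fan: "distinct [c, u1, u2, u3, u4, u5]" "{c, u1, u2, u3, u4, u5} \<subseteq> f ` V"
      "{c, u1} \<in> (`) f ` E" "{c, u2} \<in> (`) f ` E" "{c, u3} \<in> (`) f ` E"
      "{c, u4} \<in> (`) f ` E" "{c, u5} \<in> (`) f ` E" "{u1, u2} \<in> (`) f ` E"
      "{u2, u3} \<in> (`) f ` E" "{u3, u4} \<in> (`) f ` E" "{u4, u5} \<in> (`) f ` E"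
    unfolding has_4fan_def by (elim exE conjE) (rule that; assumption)
  define h where "h = inv_into V f"
  have h: "h b \<in> V" "f (h b) = b" if "b \<in> f ` V" for b
    unfolding h_def using that by (auto simp: inv_into_into f_inv_into_f)
  have edge: "{h a, h b} \<in> E" if "{a, b} \<in> (`) f ` E" "a \<in> f ` V" "b \<in> f ` V" for a b
    using image_edge_iff[of "h a" "h b"] that h by simp
  have inj_h: "inj_on h (f ` V)"
    unfolding h_def by (rule inj_on_inv_into) simp
  have "distinct [h c, h u1, h u2, h u3, h u4, h u5]"
    using distinct_map[of h "[c, u1, u2, u3, u4, u5]"] fan(1) inj_on_subset[OF inj_h fan(2)]
    by (simp only: list.map list.set simp_thms)
  moreover have fan_V: "c \<in> f ` V" "u1 \<in> f ` V" "u2 \<in> f ` V" "u3 \<in> f ` V" "u4 \<in> f ` V" "u5 \<in> f ` V"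
    using fan(2) by (simp_all only: insert_subset)
  then have "{h c, h u1, h u2, h u3, h u4, h u5} \<subseteq> V"
    using h(1) by (simp only: insert_subset empty_subsetI simp_thms)
  moreover have "{h c, h u1} \<in> E" "{h c, h u2} \<in> E" "{h c, h u3} \<in> E" "{h c, h u4} \<in> E"
    "{h c, h u5} \<in> E" "{h u1, h u2} \<in> E" "{h u2, h u3} \<in> E" "{h u3, h u4} \<in> E" "{h u4, h u5} \<in> E"
    using edge fan(3-11) fan_V by meson+
  ultimately show "has_4fan V E"
    unfolding has_4fan_def by (intro exI[of _ "h c"] exI[of _ "h u1"] exI[of _ "h u2"] exI[of _ "h u3"]
      exI[of _ "h u4"] exI[of _ "h u5"] conjI) assumption+
qed

lemma total_colorable_image: "total_colorable k (f ` V) ((`) f ` E) \<Longrightarrow> total_colorable k V E"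
proof -
  assume "total_colorable k (f ` V) ((`) f ` E)"
  then obtain cv ce where col: "total_coloring k (f ` V) ((`) f ` E) cv ce"
    unfolding total_colorable_def by blast
  have "total_coloring k V E (cv \<circ> f) (ce \<circ> (`) f)"
    unfolding total_coloring_def
  proof (intro conjI allI ballI impI)
    fix a b assume "{a, b} \<in> E"
    then have "{f a, f b} \<in> (`) f ` E"
      by (metis image_empty image_eqI image_insert)
    then show "(cv \<circ> f) a \<noteq> (cv \<circ> f) b"
      using col unfolding total_coloring_def by auto
  next
    fix e e' assume "e \<in> E" "e' \<in> E" "e \<noteq> e' \<and> e \<inter> e' \<noteq> {}"
    then have "f ` e \<noteq> f ` e'" "f ` e \<inter> f ` e' \<noteq> {}"
      using inj_on_image_edges by (auto dest: inj_onD)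
    then show "(ce \<circ> (`) f) e \<noteq> (ce \<circ> (`) f) e'"
      using col \<open>e \<in> E\<close> \<open>e' \<in> E\<close> unfolding total_coloring_def by auto
  qed (use col in \<open>auto simp: total_coloring_def\<close>)
  then show ?thesis
    unfolding total_colorable_def by blast
qed

lemma image_inv_into_image: "A \<subseteq> V \<Longrightarrow> (h \<circ> inv_into V f) ` f ` A = h ` A"
  unfolding image_image using inv_into_f_f[OF inj] by (intro image_cong) auto

lemma inv_into_image_edge: "e \<in> E \<Longrightarrow> inv_into E ((`) f) (f ` e) = e"
  using inv_into_f_f[OF inj_on_image_edges] .

lemma image_edges_Int: "e1 \<in> E \<Longrightarrow> e2 \<in> E \<Longrightarrow> f ` e1 \<inter> f ` e2 = f ` (e1 \<inter> e2)"
  using inj_on_image_Int[OF inj] edges_subset_Pow by blast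

lemma planar_image:
  assumes "planar V E"
  shows "planar (f ` V) ((`) f ` E)"
proof -
  obtain pos :: "'a \<Rightarrow> real^2" and g :: "'a set \<Rightarrow> real \<Rightarrow> real^2" where
    pos: "inj_on pos V" and
    arcs: "\<forall>e\<in>E. arc (g e) \<and> {pathstart (g e), pathfinish (g e)} = pos ` e \<and>
                  path_image (g e) \<inter> pos ` V = pos ` e" and
    crossings: "\<forall>e\<in>E. \<forall>e'\<in>E. e \<noteq> e' \<longrightarrow> path_image (g e) \<inter> path_image (g e') \<subseteq> pos ` (e \<inter> e')"
    using assms unfolding planar_def by blast
  define pos' where "pos' = pos \<circ> inv_into V f"
  define g' where "g' = g \<circ> inv_into E ((`) f)"
  have pos'_image: "pos' ` f ` A = pos ` A" if "A \<subseteq> V" for A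
    unfolding pos'_def using that by (rule image_inv_into_image)
  have g'_edge: "g' (f ` e) = g e" if "e \<in> E" for e
    unfolding g'_def using inv_into_image_edge[OF that] by simp
  have inj': "inj_on pos' (f ` V)"
    using pos inj unfolding pos'_def by (auto simp: inj_on_def)
  have arcs': "\<forall>e'\<in>(`) f ` E. arc (g' e') \<and> {pathstart (g' e'), pathfinish (g' e')} = pos' ` e' \<and>
      path_image (g' e') \<inter> pos' ` f ` V = pos' ` e'"
  proof
    fix e' assume "e' \<in> (`) f ` E"
    then obtain e where "e \<in> E" "e' = f ` e"
      by blast
    moreover have "e \<subseteq> V"
      using \<open>e \<in> E\<close> edges_subset_Pow by blast
    ultimately show "arc (g' e') \<and> {pathstart (g' e'), pathfinish (g' e')} = pos' ` e' \<and>
        path_image (g' e') \<inter> pos' ` f ` V = pos' ` e'"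
      using arcs g'_edge pos'_image[of e] pos'_image[of V] by simp
  qed
  have crossings': "path_image (g' e1') \<inter> path_image (g' e2') \<subseteq> pos' ` (e1' \<inter> e2')"
    if e': "e1' \<in> (`) f ` E" "e2' \<in> (`) f ` E" "e1' \<noteq> e2'" for e1' e2'
  proof -
    obtain e1 e2 where e: "e1 \<in> E" "e2 \<in> E" "e1' = f ` e1" "e2' = f ` e2"
      using e'(1,2) by blast
    then have "e1 \<noteq> e2" "e1 \<inter> e2 \<subseteq> V"
      using e'(3) edges_subset_Pow by auto
    then show ?thesis
      using crossings[rule_format, OF e(1,2)] e g'_edge pos'_image[of "e1 \<inter> e2"]
      by (simp add: image_edges_Int)
  qed
  show ?thesis
    unfolding planar_def
    by (intro exI[of _ pos'] exI[of _ g'] conjI[OF inj'] conjI[OF arcs'] ballI impI)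
      (rule crossings'; assumption)
qed

end

lemma minimal_counterexample_colorable_if_smaller:
  fixes V' :: "'b set"
  assumes "minimal_counterexample V E" "simple_graph V' E'" "planar V' E'" "max_degree_le 8 V' E'"
    "\<not> has_4fan V' E'" "card V' + card E' < card V + card E"
  shows "total_colorable 9 V' E'"
proof -
  obtain f :: "'b \<Rightarrow> nat" where f: "inj_on f V'"
    using assms(2) finite_imp_inj_to_nat_seg unfolding simple_graph_def by metis
  then have rel: "graph_relabelling V' E' f"
    using assms(2) by unfold_locales
  have "card (f ` V') + card ((`) f ` E') = card V' + card E'"
    using card_image[OF f] card_image[OF graph_relabelling.inj_on_image_edges[OF rel]] by simp
  moreover have "\<forall>(VH :: nat set) EH. simple_graph VH EH \<and> planar VH EH \<and> max_degree_le 8 VH EH \<and>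
      \<not> has_4fan VH EH \<and> card VH + card EH < card V + card E \<longrightarrow> total_colorable 9 VH EH"
    using assms(1) unfolding minimal_counterexample_def by blast
  moreover have "\<not> has_4fan (f ` V') ((`) f ` E')"
    using graph_relabelling.has_4fan_image[OF rel] assms(5) by blast
  ultimately have "total_colorable 9 (f ` V') ((`) f ` E')"
    using graph_relabelling.simple_graph_image[OF rel] graph_relabelling.planar_image[OF rel assms(3)]
      graph_relabelling.max_degree_le_image[OF rel assms(4)] assms(6)
    by simp
  then show ?thesis
    using graph_relabelling.total_colorable_image[OF rel] by blast
qed

lemma minimal_counterexample_colorable_delete_edge:
  assumes "minimal_counterexample V E" "e \<in> E"
  shows "total_colorable 9 V (E - {e})"
proof (rule minimal_counterexample_colorable_if_smaller[OF assms(1)])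
  have simple: "simple_graph V E"
    using assms(1) unfolding minimal_counterexample_def by blast
  then show "simple_graph V (E - {e})"
    by (rule simple_graph_mono) blast
  show "planar V (E - {e})"
    using assms(1) planar_mono unfolding minimal_counterexample_def by blast
  show "max_degree_le 8 V (E - {e})"
    using assms(1) max_degree_le_mono[OF simple] unfolding minimal_counterexample_def max_degree_eq_def
    by blast
  show "\<not> has_4fan V (E - {e})"
    using assms(1) has_4fan_mono unfolding minimal_counterexample_def by blast
  show "card V + card (E - {e}) < card V + card E"
    using card_Diff1_less[OF simple_graph_finite_edges[OF simple] assms(2)] by simp
qed
section \<open>Total colourings, one vertex at a time\<close>

definition proper_at :: "'a set set \<Rightarrow> ('a \<Rightarrow> 'c) \<Rightarrow> ('a set \<Rightarrow> 'c) \<Rightarrow> 'a \<Rightarrow> bool" where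
  "proper_at E cv ce q \<longleftrightarrow>
     inj_on (\<lambda>r. ce {q, r}) (nbrs E q) \<and> cv q \<notin> (\<lambda>r. ce {q, r}) ` nbrs E q"

lemma proper_at_if_colours_differ:
  assumes edges: "\<And>e e' q. e \<in> E \<Longrightarrow> e' \<in> E \<Longrightarrow> e \<noteq> e' \<Longrightarrow> q \<in> e \<Longrightarrow> q \<in> e' \<Longrightarrow> ce e \<noteq> ce e'"
    and incident: "\<And>e q. e \<in> E \<Longrightarrow> q \<in> e \<Longrightarrow> cv q \<noteq> ce e"
  shows "proper_at E cv ce q"
proof -
  have "r = r'" if "{q, r} \<in> E" "{q, r'} \<in> E" "ce {q, r} = ce {q, r'}" for r r'
  proof (rule ccontr)
    assume "r \<noteq> r'"
    then have "{q, r} \<noteq> {q, r'}"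
      by (simp add: doubleton_eq_iff)
    then show False
      using edges[OF that(1,2)] that(3) by blast
  qed
  moreover have "cv q \<noteq> ce {q, r}" if "{q, r} \<in> E" for r
    using incident[OF that] by simp
  ultimately show ?thesis
    unfolding proper_at_def nbrs_def inj_on_def by blast
qed

lemma colours_differ_if_proper_at:
  assumes "simple_graph V E" and proper: "\<And>q. proper_at E cv ce q"
  shows "\<And>e e' q. e \<in> E \<Longrightarrow> e' \<in> E \<Longrightarrow> e \<noteq> e' \<Longrightarrow> q \<in> e \<Longrightarrow> q \<in> e' \<Longrightarrow> ce e \<noteq> ce e'"
    and "\<And>e q. e \<in> E \<Longrightarrow> q \<in> e \<Longrightarrow> cv q \<noteq> ce e"
proof -
  fix e e' q assume e: "e \<in> E" "e' \<in> E" "e \<noteq> e'" "q \<in> e" "q \<in> e'"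
  obtain r r' where "e = {q, r}" "e' = {q, r'}"
    using simple_graph_edge_through[OF assms(1) e(1,4)] simple_graph_edge_through[OF assms(1) e(2,5)]
    by metis
  with e proper[of q] show "ce e \<noteq> ce e'"
    unfolding proper_at_def nbrs_def inj_on_def by blast
next
  fix e q assume e: "e \<in> E" "q \<in> e"
  obtain r where "e = {q, r}"
    using simple_graph_edge_through[OF assms(1) e] .
  with e proper[of q] show "cv q \<noteq> ce e"
    unfolding proper_at_def nbrs_def by blast
qed

lemma total_coloring_iff_proper_at:
  assumes "simple_graph V E"
  shows "total_coloring k V E cv ce \<longleftrightarrow>
    (\<forall>q\<in>V. cv q \<in> {1..k}) \<and> (\<forall>e\<in>E. ce e \<in> {1..k}) \<and> (\<forall>a b. {a, b} \<in> E \<longrightarrow> cv a \<noteq> cv b) \<and>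
    (\<forall>q. proper_at E cv ce q)"
proof -
  have "(\<forall>e\<in>E. \<forall>e'\<in>E. e \<noteq> e' \<and> e \<inter> e' \<noteq> {} \<longrightarrow> ce e \<noteq> ce e') \<and> (\<forall>e\<in>E. \<forall>q\<in>e. cv q \<noteq> ce e)
      \<longleftrightarrow> (\<forall>q. proper_at E cv ce q)"
  proof
    assume "(\<forall>e\<in>E. \<forall>e'\<in>E. e \<noteq> e' \<and> e \<inter> e' \<noteq> {} \<longrightarrow> ce e \<noteq> ce e') \<and> (\<forall>e\<in>E. \<forall>q\<in>e. cv q \<noteq> ce e)"
    then show "\<forall>q. proper_at E cv ce q"
      by (intro allI proper_at_if_colours_differ) blast+
  next
    assume "\<forall>q. proper_at E cv ce q"
    then show "(\<forall>e\<in>E. \<forall>e'\<in>E. e \<noteq> e' \<and> e \<inter> e' \<noteq> {} \<longrightarrow> ce e \<noteq> ce e') \<and> (\<forall>e\<in>E. \<forall>q\<in>e. cv q \<noteq> ce e)"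
      using colours_differ_if_proper_at[OF assms] by blast
  qed
  then show ?thesis
    unfolding total_coloring_def by (simp only: conj_assoc)
qed

lemma proper_at_distinct_colours:
  "proper_at E cv ce q \<Longrightarrow> distinct rs \<Longrightarrow> set rs \<subseteq> nbrs E q \<Longrightarrow> distinct (map (\<lambda>r. ce {q, r}) rs)"
  unfolding proper_at_def distinct_map by (blast intro: inj_on_subset)

lemma proper_at_recolour_edges:
  assumes old: "proper_at E' cv ce q"
    and edges: "E \<subseteq> E' \<union> F"
    and keep: "\<And>e. e \<notin> F \<Longrightarrow> ce' e = ce e"
    and new_inj: "inj_on (\<lambda>r. ce' {q, r}) (nbrs F q)"
    and new_colours: "(\<lambda>r. ce' {q, r}) ` nbrs F q \<subseteq> M \<union> (\<lambda>r. ce {q, r}) ` (nbrs F q \<inter> nbrs E' q)"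
    and missing: "M \<inter> insert (cv q) ((\<lambda>r. ce {q, r}) ` nbrs E' q) = {}"
    and vertex: "cv' q = cv q"
  shows "proper_at E cv' ce' q"
proof -
  let ?f = "\<lambda>r. ce {q, r}" and ?g = "\<lambda>r. ce' {q, r}"
  let ?L = "nbrs F q" and ?K = "nbrs E' q - nbrs F q"
  have N: "nbrs E q \<subseteq> ?L \<union> ?K"
    using edges unfolding nbrs_def by blast
  have g_K: "?g ` ?K = ?f ` ?K"
    using keep unfolding nbrs_def by auto
  have f_inj: "inj_on ?f (nbrs E' q)" and cv_old: "cv q \<notin> ?f ` nbrs E' q"
    using old unfolding proper_at_def by blast+
  have old_disjoint: "?f ` (?L \<inter> nbrs E' q) \<inter> ?f ` ?K = {}"
    using inj_on_image_Int[OF f_inj, of "?L \<inter> nbrs E' q" ?K] by auto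
  have old_colours: "?f ` (?L \<inter> nbrs E' q) \<subseteq> ?f ` nbrs E' q" "?f ` ?K \<subseteq> ?f ` nbrs E' q"
    by (rule image_mono, blast)+
  then have "M \<inter> ?f ` ?K = {}"
    using missing by blast
  have "?g ` ?L \<inter> ?g ` ?K \<subseteq> (M \<union> ?f ` (?L \<inter> nbrs E' q)) \<inter> ?f ` ?K"
    by (rule Int_mono[OF new_colours equalityD1[OF g_K]])
  also have "\<dots> = {}"
    by (simp only: Int_Un_distrib2 old_disjoint \<open>M \<inter> ?f ` ?K = {}\<close> Un_empty_left)
  finally have "?g ` ?L \<inter> ?g ` ?K = {}"
    by blast
  moreover have "inj_on ?g ?K"
    using inj_on_subset[OF f_inj] keep unfolding nbrs_def by (auto simp: inj_on_def)
  moreover have "?L - ?K = ?L" "?K - ?L = ?K"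
    by blast+
  ultimately have "inj_on ?g (?L \<union> ?K)"
    using new_inj unfolding inj_on_Un by (simp only: simp_thms)
  moreover have "?g ` (?L \<union> ?K) \<subseteq> M \<union> ?f ` nbrs E' q"
    unfolding image_Un g_K using new_colours old_colours by blast
  then have "cv q \<notin> ?g ` (?L \<union> ?K)"
    using missing cv_old by blast
  ultimately show ?thesis
    unfolding proper_at_def vertex using N by (meson image_mono inj_on_subset subsetD)
qed

lemma proper_atI:
  assumes "nbrs E q \<subseteq> L" "inj_on (\<lambda>r. ce {q, r}) L" "cv q \<notin> (\<lambda>r. ce {q, r}) ` L"
  shows "proper_at E cv ce q"
  using assms unfolding proper_at_def by (meson image_mono inj_on_subset subsetD)
lemma recolour_conditions_from_lists:
  assumes "L = set rs" "distinct (map g rs)" "set (map g rs) \<subseteq> M \<union> set (map f ss)"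
    "set ss \<subseteq> L \<inter> N"
  shows "inj_on g L \<and> g ` L \<subseteq> M \<union> f ` (L \<inter> N)"
proof
  show "inj_on g L"
    using assms(1,2) by (simp add: distinct_map)
  have "f ` set ss \<subseteq> f ` (L \<inter> N)"
    using assms(4) by (rule image_mono)
  with assms(3) have "set (map g rs) \<subseteq> M \<union> f ` (L \<inter> N)"
    by (simp only: set_map) blast
  then show "g ` L \<subseteq> M \<union> f ` (L \<inter> N)"
    using assms(1) by simp
qed

lemma ex_missing_colour:
  assumes "finite S" "card S < k"
  shows "\<exists>c \<in> {1..k::nat}. c \<notin> S"
proof (rule ccontr)
  assume "\<not> (\<exists>c \<in> {1..k}. c \<notin> S)"
  then have "card {1..k} \<le> card S"
    by (intro card_mono[OF assms(1)]) blast
  with assms(2) show False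
    by simp
qed

section \<open>The recolouring puzzle\<close>

text \<open>Colours are named after the configuration edges carrying them: \<open>vx\<close>, ..., \<open>pz\<close> are the
  old colours, the primed variables the new ones, and \<open>a\<close> is a colour missing at v.  There is no
  old colour for vy, the deleted edge.\<close>

lemma configuration_recolouring:
  fixes a vx vt vw vz vu xt tw wy zu py pz :: 'c
  assumes "distinct [a, vx, vt, vw, vz, vu]" "distinct [vx, xt]" "distinct [vt, xt, tw]"
    "distinct [vw, tw, wy]" "distinct [wy, py]" "distinct [py, pz]" "distinct [vz, pz, zu]"
    "distinct [vu, zu]"
  obtains vx' vt' vw' vy' vz' vu' xt' tw' wy' zu' py' pz' where
    "distinct [vx', vt', vw', vy', vz', vu']" "{vx', vt', vw', vy', vz', vu'} \<subseteq> {a, vx, vt, vw, vz, vu}"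
    "distinct [vx', xt']" "{vx', xt'} \<subseteq> {vx, xt}"
    "distinct [vw', tw', wy']" "{vw', tw', wy'} \<subseteq> {vw, tw, wy}"
    "distinct [py', pz']" "{py', pz'} \<subseteq> {py, pz}"
    "distinct [vu', zu']" "{vu', zu'} \<subseteq> {vu, zu}"
    "distinct [vt', xt', tw']" "distinct [vy', wy', py']" "distinct [vz', pz', zu']"
proof -
  define ok where "ok vx' vt' vw' vy' vz' vu' xt' tw' wy' zu' py' pz' \<longleftrightarrow>
    distinct [vx', vt', vw', vy', vz', vu'] \<and> {vx', vt', vw', vy', vz', vu'} \<subseteq> {a, vx, vt, vw, vz, vu} \<and>
    distinct [vx', xt'] \<and> {vx', xt'} \<subseteq> {vx, xt} \<and>
    distinct [vw', tw', wy'] \<and> {vw', tw', wy'} \<subseteq> {vw, tw, wy} \<and>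
    distinct [py', pz'] \<and> {py', pz'} \<subseteq> {py, pz} \<and>
    distinct [vu', zu'] \<and> {vu', zu'} \<subseteq> {vu, zu} \<and>
    distinct [vt', xt', tw'] \<and> distinct [vy', wy', py'] \<and> distinct [vz', pz', zu']"
    for vx' vt' vw' vy' vz' vu' xt' tw' wy' zu' py' pz'
  \<comment> \<open>Keeping all colours and giving vy the colour a works unless \<open>a \<in> {wy, py}\<close>; the other
    rows cover the possible coincidences among the old colours.\<close>
  have "ok vx vt vw a vz vu xt tw wy zu py pz \<or> ok vx vt vw vz a vu xt tw wy zu py pz \<or>
    ok vx a vw vt vz vu xt tw wy zu py pz \<or> ok vx vz vw vt a vu xt tw wy zu py pz \<or>
    ok vx a vw vz vt vu xt tw wy zu py pz \<or> ok vx vt vw vz a vu xt tw wy zu pz py \<or>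
    ok vx vt vw a vz vu xt tw wy zu pz py \<or> ok vx vt vw a vz vu xt wy tw zu py pz \<or>
    ok vx a vw vt vz vu xt wy tw zu py pz \<or> ok vx vt vw vu vz zu xt tw wy vu py pz \<or>
    ok xt vt vw vx vz vu vx tw wy zu py pz \<or> ok vx vt wy vw vz vu xt vw tw zu py pz \<or>
    ok vx vu vw vz vt zu xt tw wy vu pz py \<or> ok vx vt tw vw vz vu xt vw wy zu py pz \<or>
    ok xt vz tw vt vw vu vx vw wy zu py pz \<or> ok vx vt tw vz vw vu xt wy vw zu py pz \<or>
    ok vx vt wy vu vz zu xt vw tw vu pz py \<or> ok vx vt tw vw vz zu xt vw wy vu pz py"
    using assms unfolding ok_def
    by (simp only: distinct.simps list.set insert_iff empty_iff insert_subset empty_subsetI simp_thms)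
      (smt (z3))
  then obtain vx' vt' vw' vy' vz' vu' xt' tw' wy' zu' py' pz'
    where "ok vx' vt' vw' vy' vz' vu' xt' tw' wy' zu' py' pz'"
    by blast
  then show thesis
    unfolding ok_def by (elim conjE) (rule that)
qed

locale degree8_configuration =
  fixes V :: "'a set" and E :: "'a set set" and v x t w y z u p :: 'a
  assumes simple: "simple_graph V E"
    and distinct_vertices: "distinct [v, x, t, w, y, z, u, p]"
    and edges: "{v, x} \<in> E" "{v, t} \<in> E" "{v, w} \<in> E" "{v, y} \<in> E" "{v, z} \<in> E" "{v, u} \<in> E"
      "{x, t} \<in> E" "{t, w} \<in> E" "{w, y} \<in> E" "{z, u} \<in> E" "{p, y} \<in> E" "{p, z} \<in> E"
    and nbrs_t: "nbrs E t = {v, x, w}"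
    and nbrs_y: "nbrs E y = {v, w, p}"
    and nbrs_z: "nbrs E z = {v, p, u}"
    and card_nbrs_v: "card (nbrs E v) \<le> 8"
begin

definition config_edges :: "'a set set" where
  "config_edges = {{v, x}, {v, t}, {v, w}, {v, y}, {v, z}, {v, u},
     {x, t}, {t, w}, {w, y}, {z, u}, {p, y}, {p, z}}"

lemma edges_subset: "E \<subseteq> (E - {{v, y}}) \<union> config_edges"
  unfolding config_edges_def by blast

lemma nbrs_config_edges:
  "nbrs config_edges v = {x, t, w, y, z, u}" "nbrs config_edges x = {v, t}"
  "nbrs config_edges t = {v, x, w}" "nbrs config_edges w = {v, t, y}"
  "nbrs config_edges y = {v, w, p}" "nbrs config_edges z = {v, p, u}"
  "nbrs config_edges u = {v, z}" "nbrs config_edges p = {y, z}"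
  "q \<notin> {v, x, t, w, y, z, u, p} \<Longrightarrow> nbrs config_edges q = {}"
  using distinct_vertices unfolding nbrs_def config_edges_def by (auto simp: doubleton_eq_iff)

lemma nbrs_old_config:
  "{x, t, w, z, u} \<subseteq> nbrs (E - {{v, y}}) v" "{v, t} \<subseteq> nbrs (E - {{v, y}}) x"
  "{v, x, w} \<subseteq> nbrs (E - {{v, y}}) t" "{v, t, y} \<subseteq> nbrs (E - {{v, y}}) w"
  "{w, p} \<subseteq> nbrs (E - {{v, y}}) y" "{v, p, u} \<subseteq> nbrs (E - {{v, y}}) z"
  "{v, z} \<subseteq> nbrs (E - {{v, y}}) u" "{y, z} \<subseteq> nbrs (E - {{v, y}}) p"
  using edges distinct_vertices unfolding nbrs_def by (auto simp: insert_commute doubleton_eq_iff)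

end

locale recoloured_configuration = degree8_configuration +
  fixes cv :: "'a \<Rightarrow> nat" and ce :: "'a set \<Rightarrow> nat"
    and a vx' vt' vw' vy' vz' vu' xt' tw' wy' zu' py' pz' :: nat
  assumes coloured: "total_coloring 9 V (E - {{v, y}}) cv ce"
    and a_range: "a \<in> {1..9}"
    and a_missing: "a \<notin> insert (cv v) ((\<lambda>r. ce {v, r}) ` nbrs (E - {{v, y}}) v)"
    and at_v: "distinct [vx', vt', vw', vy', vz', vu']"
      "{vx', vt', vw', vy', vz', vu'} \<subseteq> {a, ce {v, x}, ce {v, t}, ce {v, w}, ce {v, z}, ce {v, u}}"
    and at_x: "distinct [vx', xt']" "{vx', xt'} \<subseteq> {ce {x, v}, ce {x, t}}"
    and at_w: "distinct [vw', tw', wy']" "{vw', tw', wy'} \<subseteq> {ce {w, v}, ce {w, t}, ce {w, y}}"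
    and at_u: "distinct [vu', zu']" "{vu', zu'} \<subseteq> {ce {u, v}, ce {u, z}}"
    and at_p: "distinct [py', pz']" "{py', pz'} \<subseteq> {ce {p, y}, ce {p, z}}"
    and at_t: "distinct [vt', xt', tw']"
    and at_y: "distinct [vy', wy', py']"
    and at_z: "distinct [vz', pz', zu']"
begin

definition recoloured :: "'a set \<Rightarrow> nat" where
  "recoloured e =
    (if e = {v, x} then vx' else if e = {v, t} then vt' else if e = {v, w} then vw'
     else if e = {v, y} then vy' else if e = {v, z} then vz' else if e = {v, u} then vu'
     else if e = {x, t} then xt' else if e = {t, w} then tw' else if e = {w, y} then wy'
     else if e = {z, u} then zu' else if e = {p, y} then py' else if e = {p, z} then pz' else ce e)"

lemma recoloured_config_edges:
  "recoloured {v, x} = vx'" "recoloured {v, t} = vt'" "recoloured {v, w} = vw'"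
  "recoloured {v, y} = vy'" "recoloured {v, z} = vz'" "recoloured {v, u} = vu'"
  "recoloured {x, v} = vx'" "recoloured {x, t} = xt'"
  "recoloured {t, v} = vt'" "recoloured {t, x} = xt'" "recoloured {t, w} = tw'"
  "recoloured {w, v} = vw'" "recoloured {w, t} = tw'" "recoloured {w, y} = wy'"
  "recoloured {y, v} = vy'" "recoloured {y, w} = wy'" "recoloured {y, p} = py'"
  "recoloured {z, v} = vz'" "recoloured {z, p} = pz'" "recoloured {z, u} = zu'"
  "recoloured {u, v} = vu'" "recoloured {u, z} = zu'"
  "recoloured {p, y} = py'" "recoloured {p, z} = pz'"
  using distinct_vertices unfolding recoloured_def by (auto simp: doubleton_eq_iff)

lemma recoloured_other: "e \<notin> config_edges \<Longrightarrow> recoloured e = ce e"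
  unfolding recoloured_def config_edges_def by auto

lemma proper_at_old: "proper_at (E - {{v, y}}) cv ce q"
  using coloured total_coloring_iff_proper_at simple_graph_mono[OF simple] by blast

lemma proper_at_recoloured_v:
  assumes "cv' v = cv v"
  shows "proper_at E cv' recoloured v"
proof (rule proper_at_recolour_edges[where E' = "E - {{v, y}}" and cv = cv and ce = ce and q = v
      and cv' = cv' and ce' = recoloured and F = config_edges and M = "{a}", OF proper_at_old edges_subset recoloured_other
      _ _ _ assms])
  have "inj_on (\<lambda>r. recoloured {v, r}) (nbrs config_edges v) \<and>
    (\<lambda>r. recoloured {v, r}) ` nbrs config_edges v
      \<subseteq> {a} \<union> (\<lambda>r. ce {v, r}) ` (nbrs config_edges v \<inter> nbrs (E - {{v, y}}) v)"
  proof (rule recolour_conditions_from_lists[where rs = "[x, t, w, y, z, u]" and ss = "[x, t, w, z, u]"])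
    show "distinct (map (\<lambda>r. recoloured {v, r}) [x, t, w, y, z, u])"
      using at_v(1) by (simp only: list.map recoloured_config_edges)
    show "set (map (\<lambda>r. recoloured {v, r}) [x, t, w, y, z, u])
      \<subseteq> {a} \<union> set (map (\<lambda>r. ce {v, r}) [x, t, w, z, u])"
      using at_v(2) by (simp only: list.map list.set recoloured_config_edges Un_insert_left Un_empty_left)
  qed (use nbrs_old_config(1) in \<open>simp_all add: nbrs_config_edges\<close>)
  then show "inj_on (\<lambda>r. recoloured {v, r}) (nbrs config_edges v)"
    "(\<lambda>r. recoloured {v, r}) ` nbrs config_edges v
      \<subseteq> {a} \<union> (\<lambda>r. ce {v, r}) ` (nbrs config_edges v \<inter> nbrs (E - {{v, y}}) v)"
    by blast+
  show "{a} \<inter> insert (cv v) ((\<lambda>r. ce {v, r}) ` nbrs (E - {{v, y}}) v) = {}"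
    using a_missing by blast
qed

lemma proper_at_recoloured_other:
  assumes "q \<notin> {v, t, y, z}" "cv' q = cv q"
  shows "proper_at E cv' recoloured q"
proof (rule proper_at_recolour_edges[where E' = "E - {{v, y}}" and cv = cv and ce = ce and q = q
      and cv' = cv' and ce' = recoloured and F = config_edges and M = "{}", OF proper_at_old edges_subset recoloured_other
      _ _ _ assms(2)])
  have "inj_on (\<lambda>r. recoloured {q, r}) (nbrs config_edges q) \<and>
    (\<lambda>r. recoloured {q, r}) ` nbrs config_edges q
      \<subseteq> {} \<union> (\<lambda>r. ce {q, r}) ` (nbrs config_edges q \<inter> nbrs (E - {{v, y}}) q)"
  proof -
    consider "q = x" | "q = w" | "q = u" | "q = p" | "q \<notin> {v, x, t, w, y, z, u, p}"
      using assms(1) by blast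
    then show ?thesis
    proof cases
      case 1
      show ?thesis
        by (rule recolour_conditions_from_lists[where rs = "[v, t]" and ss = "[v, t]"])
          (use 1 at_x nbrs_old_config(2) in \<open>simp_all add: nbrs_config_edges recoloured_config_edges\<close>)
    next
      case 2
      show ?thesis
        by (rule recolour_conditions_from_lists[where rs = "[v, t, y]" and ss = "[v, t, y]"])
          (use 2 at_w nbrs_old_config(4) in \<open>simp_all add: nbrs_config_edges recoloured_config_edges\<close>)
    next
      case 3
      show ?thesis
        by (rule recolour_conditions_from_lists[where rs = "[v, z]" and ss = "[v, z]"])
          (use 3 at_u nbrs_old_config(7) in \<open>simp_all add: nbrs_config_edges recoloured_config_edges\<close>)
    next
      case 4
      show ?thesis
        by (rule recolour_conditions_from_lists[where rs = "[y, z]" and ss = "[y, z]"])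
          (use 4 at_p nbrs_old_config(8) in \<open>simp_all add: nbrs_config_edges recoloured_config_edges\<close>)
    qed (simp add: nbrs_config_edges)
  qed
  then show "inj_on (\<lambda>r. recoloured {q, r}) (nbrs config_edges q)"
    "(\<lambda>r. recoloured {q, r}) ` nbrs config_edges q
      \<subseteq> {} \<union> (\<lambda>r. ce {q, r}) ` (nbrs config_edges q \<inter> nbrs (E - {{v, y}}) q)"
    by blast+
qed auto

lemma proper_at_recoloured_t: "cv' t \<notin> {vt', xt', tw'} \<Longrightarrow> proper_at E cv' recoloured t"
  by (rule proper_atI[OF equalityD1[OF nbrs_t]])
    (use at_t distinct_vertices in \<open>auto simp: recoloured_config_edges\<close>)

lemma proper_at_recoloured_y: "cv' y \<notin> {vy', wy', py'} \<Longrightarrow> proper_at E cv' recoloured y"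
  by (rule proper_atI[OF equalityD1[OF nbrs_y]])
    (use at_y distinct_vertices in \<open>auto simp: recoloured_config_edges\<close>)

lemma proper_at_recoloured_z: "cv' z \<notin> {vz', pz', zu'} \<Longrightarrow> proper_at E cv' recoloured z"
  by (rule proper_atI[OF equalityD1[OF nbrs_z]])
    (use at_z distinct_vertices in \<open>auto simp: recoloured_config_edges\<close>)

lemma proper_at_recoloured:
  assumes "\<And>q. q \<notin> {t, y, z} \<Longrightarrow> cv' q = cv q"
    and "cv' t \<notin> {vt', xt', tw'}" "cv' y \<notin> {vy', wy', py'}" "cv' z \<notin> {vz', pz', zu'}"
  shows "proper_at E cv' recoloured q"
proof -
  consider "q = t" | "q = y" | "q = z" | "q = v" | "q \<notin> {v, t, y, z}"
    by blast
  then show ?thesis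
  proof cases
    case 4
    then show ?thesis
      using proper_at_recoloured_v assms(1) distinct_vertices by simp
  next
    case 5
    then show ?thesis
      using proper_at_recoloured_other assms(1) by simp
  qed (use proper_at_recoloured_t proper_at_recoloured_y proper_at_recoloured_z assms(2-4) in simp_all)
qed

lemma recoloured_range: "e \<in> E \<Longrightarrow> recoloured e \<in> {1..9}"
proof -
  have "\<forall>e \<in> E - {{v, y}}. ce e \<in> {1..9}"
    using coloured unfolding total_coloring_def by (elim conjE)
  then have old: "ce ` (E - {{v, y}}) \<subseteq> {1..9}"
    by (simp only: image_subset_iff)
  have "{ce {v, x}, ce {v, t}, ce {v, w}, ce {v, z}, ce {v, u}, ce {x, v}, ce {x, t}, ce {w, v},
      ce {w, t}, ce {w, y}, ce {u, v}, ce {u, z}, ce {p, y}, ce {p, z}} \<subseteq> ce ` (E - {{v, y}})"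
    using edges distinct_vertices by (auto intro!: imageI simp: insert_commute doubleton_eq_iff)
  then have "{ce {v, x}, ce {v, t}, ce {v, w}, ce {v, z}, ce {v, u}, ce {x, v}, ce {x, t}, ce {w, v},
      ce {w, t}, ce {w, y}, ce {u, v}, ce {u, z}, ce {p, y}, ce {p, z}} \<subseteq> {1..9}"
    using old by (rule order_trans)
  then have "{a, ce {v, x}, ce {v, t}, ce {v, w}, ce {v, z}, ce {v, u}} \<subseteq> {1..9}"
    "{ce {x, v}, ce {x, t}} \<subseteq> {1..9}" "{ce {w, v}, ce {w, t}, ce {w, y}} \<subseteq> {1..9}"
    "{ce {u, v}, ce {u, z}} \<subseteq> {1..9}" "{ce {p, y}, ce {p, z}} \<subseteq> {1..9}"
    using a_range by blast+
  then have new: "{vx', vt', vw', vy', vz', vu'} \<subseteq> {1..9}" "{vx', xt'} \<subseteq> {1..9}"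
    "{vw', tw', wy'} \<subseteq> {1..9}" "{vu', zu'} \<subseteq> {1..9}" "{py', pz'} \<subseteq> {1..9}"
    using at_v(2) at_x(2) at_w(2) at_u(2) at_p(2) by (meson order_trans)+
  assume "e \<in> E"
  show "recoloured e \<in> {1..9}"
  proof (cases "e \<in> config_edges")
    case True
    then show ?thesis
      using new unfolding config_edges_def by (auto simp: recoloured_config_edges)
  next
    case False
    then have "e \<in> E - {{v, y}}"
      using \<open>e \<in> E\<close> unfolding config_edges_def by blast
    then show ?thesis
      using old recoloured_other[OF False] by auto
  qed
qed

lemma adjacent_recoloured:
  assumes keep: "\<And>q. q \<notin> {t, y, z} \<Longrightarrow> cv' q = cv q"
    and fresh: "\<And>r. r \<in> {t, y, z} \<Longrightarrow> cv' r \<notin> cv ` nbrs E r"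
    and edge: "{r, s} \<in> E"
  shows "cv' r \<noteq> cv' s"
proof -
  have separated: "nbrs E q \<inter> {t, y, z} = {}" if "q \<in> {t, y, z}" for q
    using that nbrs_t nbrs_y nbrs_z distinct_vertices by auto
  have old: "\<forall>a b. {a, b} \<in> E - {{v, y}} \<longrightarrow> cv a \<noteq> cv b"
    using coloured unfolding total_coloring_def by (elim conjE)
  consider "r \<in> {t, y, z}" | "s \<in> {t, y, z}" | "r \<notin> {t, y, z}" "s \<notin> {t, y, z}"
    by blast
  then show ?thesis
  proof cases
    case 1
    then have "s \<in> nbrs E r" "s \<notin> {t, y, z}"
      using edge separated[OF 1] unfolding nbrs_def by auto
    then show ?thesis
      using fresh[OF 1] keep by (metis image_eqI)
  next
    case 2
    then have "r \<in> nbrs E s" "r \<notin> {t, y, z}"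
      using edge separated[OF 2] unfolding nbrs_def by (auto simp: insert_commute)
    then show ?thesis
      using fresh[OF 2] keep by (metis image_eqI)
  next
    case 3
    then have "{r, s} \<in> E - {{v, y}}"
      using edge by (auto simp: doubleton_eq_iff)
    with 3 old show ?thesis
      using keep by simp
  qed
qed

lemma total_colorable: "total_colorable 9 V E"
proof -
  have missing: "\<exists>c\<in>{1..9}. c \<notin> set cs" if "length cs = 6" for cs :: "nat list"
    by (rule ex_missing_colour, simp, rule le_less_trans[OF card_length]) (simp add: that)
  obtain ct where ct: "ct \<in> {1..9}" "ct \<notin> set [cv v, cv x, cv w, vt', xt', tw']"
    using missing[of "[cv v, cv x, cv w, vt', xt', tw']"] by auto
  obtain cy where cy: "cy \<in> {1..9}" "cy \<notin> set [cv v, cv w, cv p, vy', wy', py']"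
    using missing[of "[cv v, cv w, cv p, vy', wy', py']"] by auto
  obtain cz where cz: "cz \<in> {1..9}" "cz \<notin> set [cv v, cv p, cv u, vz', pz', zu']"
    using missing[of "[cv v, cv p, cv u, vz', pz', zu']"] by auto
  define cv' where "cv' = cv(t := ct, y := cy, z := cz)"
  have keep: "cv' q = cv q" if "q \<notin> {t, y, z}" for q
    using that unfolding cv'_def by simp
  have new: "cv' t = ct" "cv' y = cy" "cv' z = cz"
    using distinct_vertices unfolding cv'_def by auto
  have "proper_at E cv' recoloured q" for q
    using proper_at_recoloured[of cv'] keep ct(2) cy(2) cz(2) new by simp
  moreover have "cv' r \<noteq> cv' s" if "{r, s} \<in> E" for r s
    by (rule adjacent_recoloured[OF keep _ that])
      (use ct cy cz new nbrs_t nbrs_y nbrs_z in auto)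
  moreover have "cv' q \<in> {1..9}" if "q \<in> V" for q
    using coloured that ct cy cz unfolding total_coloring_def cv'_def by auto
  ultimately have "total_coloring 9 V E cv' recoloured"
    using recoloured_range total_coloring_iff_proper_at[OF simple] by blast
  then show ?thesis
    unfolding total_colorable_def by blast
qed

end

context degree8_configuration begin

lemma colour_missing_at_v:
  assumes "total_coloring 9 V (E - {{v, y}}) cv ce"
  obtains a where "a \<in> {1..9}" "a \<notin> insert (cv v) ((\<lambda>r. ce {v, r}) ` nbrs (E - {{v, y}}) v)"
proof -
  have "nbrs (E - {{v, y}}) v \<subseteq> nbrs E v - {y}"
    unfolding nbrs_def by auto
  moreover have "card (nbrs E v - {y}) \<le> 7"
    using card_nbrs_v edges(4) unfolding nbrs_def by (simp add: card_Diff_singleton_if)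
  ultimately have "card (nbrs (E - {{v, y}}) v) \<le> 7"
    by (meson card_mono finite_Diff finite_nbrs[OF simple] le_trans)
  moreover have fin: "finite (nbrs (E - {{v, y}}) v)"
    using finite_nbrs[OF simple_graph_mono[OF simple Diff_subset]] .
  ultimately have "card (insert (cv v) ((\<lambda>r. ce {v, r}) ` nbrs (E - {{v, y}}) v)) < 9"
    using card_image_le[OF fin, of "\<lambda>r. ce {v, r}"] by (simp add: card_insert_if)
  then have "\<exists>a \<in> {1..9}. a \<notin> insert (cv v) ((\<lambda>r. ce {v, r}) ` nbrs (E - {{v, y}}) v)"
    by (intro ex_missing_colour) (use fin in simp)
  then show thesis
    by (elim bexE) (rule that)
qed

lemma distinct_old_colours:
  assumes "\<And>q. proper_at (E - {{v, y}}) cv ce q"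
  shows "distinct [ce {v, x}, ce {v, t}, ce {v, w}, ce {v, z}, ce {v, u}]"
    "distinct [ce {x, v}, ce {x, t}]" "distinct [ce {t, v}, ce {t, x}, ce {t, w}]"
    "distinct [ce {w, v}, ce {w, t}, ce {w, y}]" "distinct [ce {y, w}, ce {y, p}]"
    "distinct [ce {p, y}, ce {p, z}]" "distinct [ce {z, v}, ce {z, p}, ce {z, u}]"
    "distinct [ce {u, v}, ce {u, z}]"
  using proper_at_distinct_colours[OF assms, of "[x, t, w, z, u]" v, unfolded list.set, OF _ nbrs_old_config(1)]
    proper_at_distinct_colours[OF assms, of "[v, t]" x, unfolded list.set, OF _ nbrs_old_config(2)]
    proper_at_distinct_colours[OF assms, of "[v, x, w]" t, unfolded list.set, OF _ nbrs_old_config(3)]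
    proper_at_distinct_colours[OF assms, of "[v, t, y]" w, unfolded list.set, OF _ nbrs_old_config(4)]
    proper_at_distinct_colours[OF assms, of "[w, p]" y, unfolded list.set, OF _ nbrs_old_config(5)]
    proper_at_distinct_colours[OF assms, of "[y, z]" p, unfolded list.set, OF _ nbrs_old_config(8)]
    proper_at_distinct_colours[OF assms, of "[v, p, u]" z, unfolded list.set, OF _ nbrs_old_config(6)]
    proper_at_distinct_colours[OF assms, of "[v, z]" u, unfolded list.set, OF _ nbrs_old_config(7)]
    distinct_vertices
  by auto

lemma total_colorable_if_colorable_without_vy:
  assumes coloured: "total_coloring 9 V (E - {{v, y}}) cv ce"
  shows "total_colorable 9 V E"
proof -
  have old: "proper_at (E - {{v, y}}) cv ce q" for q
    using coloured total_coloring_iff_proper_at simple_graph_mono[OF simple] by blast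
  obtain a where a: "a \<in> {1..9}" "a \<notin> insert (cv v) ((\<lambda>r. ce {v, r}) ` nbrs (E - {{v, y}}) v)"
    using colour_missing_at_v[OF coloured] .
  note distinct = distinct_old_colours[OF old]
  have "distinct [a, ce {v, x}, ce {v, t}, ce {v, w}, ce {v, z}, ce {v, u}]"
    using distinct(1) a nbrs_old_config(1) by auto
  from this distinct(2-8) obtain vx' vt' vw' vy' vz' vu' xt' tw' wy' zu' py' pz' where new:
    "distinct [vx', vt', vw', vy', vz', vu']"
    "{vx', vt', vw', vy', vz', vu'} \<subseteq> {a, ce {v, x}, ce {v, t}, ce {v, w}, ce {v, z}, ce {v, u}}"
    "distinct [vx', xt']" "{vx', xt'} \<subseteq> {ce {x, v}, ce {x, t}}"
    "distinct [vw', tw', wy']" "{vw', tw', wy'} \<subseteq> {ce {w, v}, ce {w, t}, ce {w, y}}"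
    "distinct [py', pz']" "{py', pz'} \<subseteq> {ce {p, y}, ce {p, z}}"
    "distinct [vu', zu']" "{vu', zu'} \<subseteq> {ce {u, v}, ce {u, z}}"
    "distinct [vt', xt', tw']" "distinct [vy', wy', py']" "distinct [vz', pz', zu']"
    unfolding insert_commute[of x v] insert_commute[of t v] insert_commute[of t x]
      insert_commute[of w v] insert_commute[of w t] insert_commute[of y w] insert_commute[of y p]
      insert_commute[of z v] insert_commute[of z p] insert_commute[of u v] insert_commute[of u z]
    by (rule configuration_recolouring)
  interpret recoloured_configuration V E v x t w y z u p cv ce a
    vx' vt' vw' vy' vz' vu' xt' tw' wy' zu' py' pz'
    by (rule recoloured_configuration.intro[OF degree8_configuration_axioms
          recoloured_configuration_axioms.intro[OF coloured a new(1-4) new(5,6) new(9,10) new(7,8) new(11-13)]])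
  show ?thesis
    by (rule total_colorable)
qed

end

lemma degree8_configuration_if_degrees:
  assumes simple: "simple_graph V E" and "degree V E v = 8" "distinct [x, t, w, y, z, u]"
    "{v, x} \<in> E" "{v, t} \<in> E" "{v, w} \<in> E" "{v, y} \<in> E" "{v, z} \<in> E" "{v, u} \<in> E"
    "p \<notin> {v, x, t, w, y, z, u}"
    "{x, t} \<in> E" "{t, w} \<in> E" "{w, y} \<in> E" "{z, u} \<in> E" "{p, y} \<in> E" "{p, z} \<in> E"
    "degree V E t = 3" "degree V E y = 3" "degree V E z = 3"
  shows "degree8_configuration V E v x t w y z u p"
proof
  have "v \<noteq> x" "v \<noteq> t" "v \<noteq> w" "v \<noteq> y" "v \<noteq> z" "v \<noteq> u"
    using assms(4-9) simple_graph_edgeD(1)[OF simple] by blast+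
  with assms(3,10) show distinct: "distinct [v, x, t, w, y, z, u, p]"
    by auto
  have "{t, v} \<in> E" "{t, x} \<in> E" "{y, v} \<in> E" "{y, w} \<in> E" "{y, p} \<in> E" "{z, v} \<in> E" "{z, p} \<in> E"
    using assms(5,7,8,11,13,15,16) by (simp_all add: insert_commute)
  then show "nbrs E t = {v, x, w}" "nbrs E y = {v, w, p}" "nbrs E z = {v, p, u}"
    using nbrs_eq_if_degree_3[OF simple] assms(12,14,17-19) distinct by auto
  show "card (nbrs E v) \<le> 8"
    using assms(2) degree_eq_card_nbrs[OF simple] by simp
qed (use assms in auto)

lemma (in degree8_configuration) not_minimal_counterexample: "\<not> minimal_counterexample V E"
proof
  assume min: "minimal_counterexample V E"
  then obtain cv ce where "total_coloring 9 V (E - {{v, y}}) cv ce"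
    using minimal_counterexample_colorable_delete_edge[OF _ edges(4)] unfolding total_colorable_def by blast
  then have "total_colorable 9 V E"
    by (rule total_colorable_if_colorable_without_vy)
  with min show False
    unfolding minimal_counterexample_def by blast
qed

theorem lemma2p10:
  fixes V :: "'a set" and E :: "'a set set"
  assumes "minimal_counterexample V E"
  shows "\<not> (\<exists>v x t w y z u p.
            v \<in> V \<and> degree V E v = 8 \<and>
            distinct [x, t, w, y, z, u] \<and>
            {v, x} \<in> E \<and> {v, t} \<in> E \<and> {v, w} \<in> E \<and> {v, y} \<in> E \<and> {v, z} \<in> E \<and> {v, u} \<in> E \<and>
            p \<in> V \<and> p \<notin> {v, x, t, w, y, z, u} \<and>
            {x, t} \<in> E \<and> {t, w} \<in> E \<and> {w, y} \<in> E \<and> {z, u} \<in> E \<and>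
            {p, y} \<in> E \<and> {p, z} \<in> E \<and>
            degree V E t = 3 \<and> degree V E y = 3 \<and> degree V E z = 3)"
proof -
  have simple: "simple_graph V E"
    using assms unfolding minimal_counterexample_def by blast
  have "\<not> degree8_configuration V E v x t w y z u p" for v x t w y z u p
    using degree8_configuration.not_minimal_counterexample assms by metis
  then show ?thesis
    using degree8_configuration_if_degrees[OF simple] by blast
qed

end
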